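(* Let $X$ be a nonempty Polish space and, for $n\in\omega$, let $D_n,R_n$ be dense $G_\delta$ subsets of some open subsets of $X$ and $f_n:D_n\to R_n$ a continuous, open and onto map. Assume $\Delta(X)\subseteq\overline{A^f}\setminus A^f$, where $A^f=\bigcup_n\mathrm{Graph}(f_n)$. Then $(X,A^f)$ is a digraph of uncountable Borel chromatic number.
   Context: $\Delta(X)$ is the diagonal of $X$. A digraph on $X$ is a relation disjoint from $\Delta(X)$. The Borel chromatic number of a digraph $A$ on Polish $X$ is the least cardinality of a Polish $Y$ admitting a Borel $c:X\to Y$ with $c(x)\neq c(x')$ for $(x,x')\in A$; it is uncountable iff there is no Borel $c:X\to\omega$ with this property. *)

theory Defs
  imports "HOL-Analysis.Analysis"
begin

definition graph_of :: "'a set \<Rightarrow> ('a \<Rightarrow> 'b) \<Rightarrow> ('a \<times> 'b) set" where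
  "graph_of D f = {(x, f x) | x. x \<in> D}"

definition diag :: "('a \<times> 'a) set" where
  "diag = {(x, x) | x. True}"

end

theory Submission
  imports Defs
begin

text \<open>
  Suppose \<open>c\<close> is a Borel colouring of \<open>(X, A\<^sup>f)\<close> with countably many colours. The colour
  classes have the Baire property and cover \<open>X\<close>, so by the Baire category theorem some class
  \<open>c\<^sup>-\<^sup>1{k}\<close> is comeager in a nonempty open set \<open>U\<close>. As the diagonal lies in the closure of
  \<open>A\<^sup>f\<close>, some edge \<open>(y, f\<^sub>n y)\<close> has both ends in \<open>U\<close>. A continuous open map from \<open>D\<^sub>n\<close> onto a set
  that is dense in an open set pulls meager sets back to meager sets, and the \<open>G\<^sub>\<delta>\<close> set \<open>D\<^sub>n\<close> is
  comeager in the open set it is dense in. Hence near \<open>y\<close> there is \<open>z \<in> D\<^sub>n\<close> with \<open>z, f\<^sub>n z \<in> U\<close>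
  both outside the meager set \<open>U - c\<^sup>-\<^sup>1{k}\<close>, so \<open>c z = k = c (f\<^sub>n z)\<close> although
  \<open>(z, f\<^sub>n z)\<close> is an edge.
\<close>

text \<open>Equivalent to being contained in a countable union of nowhere dense sets.\<close>

definition meager :: "'a::topological_space set \<Rightarrow> bool" where
  "meager M \<longleftrightarrow> (\<exists>\<G>. countable \<G> \<and> (\<forall>G\<in>\<G>. open G \<and> closure G = UNIV) \<and> M \<inter> \<Inter>\<G> = {})"

definition has_baire_property :: "'a::topological_space set \<Rightarrow> bool" where
  "has_baire_property B \<longleftrightarrow> (\<exists>U. open U \<and> meager (sym_diff B U))"

lemma dense_iff_Int_open_nonempty:
  "closure S = UNIV \<longleftrightarrow> (\<forall>T. open T \<longrightarrow> T \<noteq> {} \<longrightarrow> S \<inter> T \<noteq> {})"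
  using dense_intersects_open[of euclidean S] by auto

lemma open_Int_nonempty_if_subset_closure:
  assumes "open S" "S \<subseteq> closure R" "S \<noteq> {}"
  shows "S \<inter> R \<noteq> {}"
  using assms open_Int_closure_eq_empty[of S R] by blast

lemma nonempty_open_not_meager:
  fixes P :: "'a::polish_space set"
  assumes "open P" "P \<noteq> {}"
  shows "\<not> meager P"
proof
  assume "meager P"
  then obtain \<G> :: "'a set set" where \<G>: "countable \<G>" "\<forall>G\<in>\<G>. open G \<and> closure G = UNIV"
    and avoid: "P \<inter> \<Inter>\<G> = {}"
    unfolding meager_def by blast
  have "euclidean closure_of \<Inter>\<G> = topspace euclidean"
    by (rule Baire_category) (use \<G> completely_metrizable_space_euclidean in auto)
  then have "closure (\<Inter>\<G>) = UNIV"
    by simp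
  with assms avoid show False
    using open_Int_nonempty_if_subset_closure[of P "\<Inter>\<G>"] by blast
qed

lemma meager_empty: "meager {}"
  unfolding meager_def by (intro exI[of _ "{}"]) simp

lemma meager_mono:
  assumes "meager N" "M \<subseteq> N"
  shows "meager M"
proof -
  obtain \<G> where "countable \<G>" "\<forall>G\<in>\<G>. open G \<and> closure G = UNIV" "N \<inter> \<Inter>\<G> = {}"
    using assms(1) unfolding meager_def by blast
  with assms(2) show ?thesis
    unfolding meager_def by (intro exI[of _ \<G>]) blast
qed

lemma meager_Union:
  assumes "countable \<M>" "\<And>M. M \<in> \<M> \<Longrightarrow> meager M"
  shows "meager (\<Union>\<M>)"
proof -
  have "\<forall>M\<in>\<M>. \<exists>\<G>. countable \<G> \<and> (\<forall>G\<in>\<G>. open G \<and> closure G = UNIV) \<and> M \<inter> \<Inter>\<G> = {}"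
    using assms(2) unfolding meager_def by blast
  then obtain \<G> where \<G>: "\<forall>M\<in>\<M>.
      countable (\<G> M) \<and> (\<forall>G\<in>\<G> M. open G \<and> closure G = UNIV) \<and> M \<inter> \<Inter>(\<G> M) = {}"
    by (rule bchoice[elim_format]) blast
  have "countable (\<Union>M\<in>\<M>. \<G> M)"
    using assms(1) \<G> by (intro countable_UN) auto
  moreover have "\<forall>G\<in>(\<Union>M\<in>\<M>. \<G> M). open G \<and> closure G = UNIV"
    using \<G> by blast
  moreover have "M \<inter> \<Inter>(\<Union>M\<in>\<M>. \<G> M) = {}" if "M \<in> \<M>" for M
  proof -
    have "M \<inter> \<Inter>(\<Union>M\<in>\<M>. \<G> M) \<subseteq> M \<inter> \<Inter>(\<G> M)"
      using that by (intro Int_mono Inter_anti_mono) auto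
    moreover have "M \<inter> \<Inter>(\<G> M) = {}"
      using \<G> that by blast
    ultimately show ?thesis
      by (metis subset_empty)
  qed
  then have "\<Union>\<M> \<inter> \<Inter>(\<Union>M\<in>\<M>. \<G> M) = {}"
    by blast
  ultimately show ?thesis
    unfolding meager_def by (intro exI[of _ "\<Union>M\<in>\<M>. \<G> M"]) simp
qed

lemma meager_Un:
  assumes "meager M" "meager N"
  shows "meager (M \<union> N)"
proof -
  have "meager (\<Union>{M, N})"
    by (rule meager_Union) (use assms in blast)+
  then show ?thesis
    by simp
qed

lemma meager_UN_nat:
  assumes "\<And>i::nat. meager (M i)"
  shows "meager (\<Union>i. M i)"
  by (rule meager_Union) (use assms in blast)+

lemma meager_closure_diff_open:
  assumes "open U"
  shows "meager (closure U - U)"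
proof -
  have "closure (U \<union> - closure U) = UNIV"
    unfolding dense_iff_Int_open_nonempty
    using open_Int_nonempty_if_subset_closure[of _ U] by blast
  then show ?thesis
    unfolding meager_def using assms by (intro exI[of _ "{U \<union> - closure U}"]) auto
qed

lemma meager_closure_diff_gdelta:
  assumes "gdelta_in euclidean D"
  shows "meager (closure D - D)"
proof -
  obtain \<T> where \<T>: "countable \<T>" "\<forall>T\<in>\<T>. open T" "\<Inter>\<T> = D"
    using assms unfolding gdelta_in_alt intersection_of_def by auto
  have "meager (closure D - T)" if "T \<in> \<T>" for T
  proof (rule meager_mono[OF meager_closure_diff_open])
    show "open T" using \<T> that by blast
    show "closure D - T \<subseteq> closure T - T"
      using \<T> that closure_mono[of D T] by blast
  qed
  then have "meager (\<Union>T\<in>\<T>. closure D - T)"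
    using \<T>(1) by (intro meager_Union) auto
  moreover have "closure D - D = (\<Union>T\<in>\<T>. closure D - T)"
    using \<T>(3) by blast
  ultimately show ?thesis
    by simp
qed

lemma borel_has_baire_property:
  assumes "B \<in> sets borel"
  shows "has_baire_property B"
  using assms unfolding sets_borel
proof (induction rule: sigma_sets.induct)
  case (Basic a)
  then show ?case
    unfolding has_baire_property_def using meager_empty by (intro exI[of _ a]) simp
next
  case Empty
  show ?case
    unfolding has_baire_property_def using meager_empty by (intro exI[of _ "{}"]) simp
next
  case (Compl a)
  then obtain U where U: "open U" "meager (sym_diff a U)"
    unfolding has_baire_property_def by blast
  have "meager (sym_diff a U \<union> (closure U - U))"
    by (rule meager_Un[OF U(2) meager_closure_diff_open[OF U(1)]])
  moreover have "sym_diff (UNIV - a) (- closure U) \<subseteq> sym_diff a U \<union> (closure U - U)"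
    using closure_subset[of U] by auto
  ultimately have "meager (sym_diff (UNIV - a) (- closure U))"
    by (rule meager_mono)
  then show ?case
    unfolding has_baire_property_def by (intro exI[of _ "- closure U"]) auto
next
  case (Union a)
  then obtain U where U: "\<And>i. open (U i)" "\<And>i. meager (sym_diff (a i) (U i))"
    unfolding has_baire_property_def by metis
  have "meager (\<Union>i. sym_diff (a i) (U i))"
    using U(2) by (rule meager_UN_nat)
  moreover have "sym_diff (\<Union>i. a i) (\<Union>i. U i) \<subseteq> (\<Union>i. sym_diff (a i) (U i))"
    by blast
  ultimately have "meager (sym_diff (\<Union>i. a i) (\<Union>i. U i))"
    by (rule meager_mono)
  then show ?case
    unfolding has_baire_property_def using U(1) by (intro exI[of _ "\<Union>i. U i"]) auto
qed

lemma baire_property_cover_comeager_somewhere: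
  fixes B :: "nat \<Rightarrow> 'a::polish_space set"
  assumes "(\<Union>k. B k) = UNIV" "\<And>k. has_baire_property (B k)"
  shows "\<exists>k U. open U \<and> U \<noteq> {} \<and> meager (U - B k)"
proof -
  obtain U where U: "\<And>k. open (U k) \<and> meager (sym_diff (B k) (U k))"
    using assms(2) unfolding has_baire_property_def by metis
  have "\<exists>k. U k \<noteq> {}"
  proof (rule ccontr)
    assume "\<nexists>k. U k \<noteq> {}"
    then have "meager (\<Union>k. B k)"
      using U by (intro meager_UN_nat) simp
    with assms(1) show False
      using nonempty_open_not_meager[of "UNIV :: 'a set"] by simp
  qed
  then show ?thesis
    using U meager_mono by blast
qed

text \<open>
  The closed set \<open>C\<close> traces \<open>g\<^sup>-\<^sup>1(-G)\<close> on \<open>D\<close>. If \<open>C\<close> contained a nonempty open subset of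
  \<open>closure D\<close>, its trace on \<open>D\<close> would be mapped onto a nonempty relatively open subset of \<open>R\<close>
  missing the dense open set \<open>G\<close>, which is impossible as \<open>R\<close> is dense in an open set.
\<close>

lemma dense_open_vimage_open_map:
  assumes R: "R \<subseteq> interior (closure R)"
    and g: "continuous_on D g" "open_map (top_of_set D) (top_of_set R) g"
    and G: "open G" "closure G = UNIV"
  shows "\<exists>H. open H \<and> closure H = UNIV \<and> D \<inter> H \<subseteq> g -` G"
proof -
  obtain C where C: "closed C" "C \<inter> D = g -` (- G) \<inter> D"
    using g(1) G(1) unfolding continuous_on_closed_invariant by blast
  have "closure (- C \<union> - closure D) = UNIV"
    unfolding dense_iff_Int_open_nonempty
  proof (intro allI impI notI)
    fix P assume P: "open P" "P \<noteq> {}" "(- C \<union> - closure D) \<inter> P = {}"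
    then have "D \<inter> P \<noteq> {}"
      using open_Int_nonempty_if_subset_closure[of P D] by blast
    have "openin (top_of_set R) (g ` (D \<inter> P))"
      using g(2) P(1) unfolding open_map_def by (auto simp: openin_open)
    then obtain Q where Q: "open Q" "g ` (D \<inter> P) = R \<inter> Q"
      unfolding openin_open by blast
    have "open (Q \<inter> interior (closure R))" "Q \<inter> interior (closure R) \<noteq> {}"
      using Q R \<open>D \<inter> P \<noteq> {}\<close> by auto
    then have "G \<inter> (Q \<inter> interior (closure R)) \<noteq> {}"
      using G(2) unfolding dense_iff_Int_open_nonempty by blast
    then have "G \<inter> Q \<inter> interior (closure R) \<inter> R \<noteq> {}"
      using open_Int_nonempty_if_subset_closure[of "G \<inter> Q \<inter> interior (closure R)" R] G(1) Q(1)
        interior_subset[of "closure R"] by (auto simp: Int_assoc)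
    moreover have "g ` (D \<inter> P) \<subseteq> - G"
      using P(3) C(2) by auto
    ultimately show False
      using Q(2) by auto
  qed
  moreover have "D \<inter> (- C \<union> - closure D) \<subseteq> g -` G"
    using C(2) closure_subset[of D] by auto
  ultimately show ?thesis
    using C(1) by (intro exI[of _ "- C \<union> - closure D"]) auto
qed

lemma meager_vimage_open_map:
  assumes "R \<subseteq> interior (closure R)"
    and "continuous_on D g" "open_map (top_of_set D) (top_of_set R) g"
    and "meager M"
  shows "meager (D \<inter> g -` M)"
proof -
  obtain \<G> where \<G>: "countable \<G>" "\<forall>G\<in>\<G>. open G \<and> closure G = UNIV" "M \<inter> \<Inter>\<G> = {}"
    using assms(4) unfolding meager_def by blast
  obtain H where H: "\<And>G. G \<in> \<G> \<Longrightarrow> open (H G) \<and> closure (H G) = UNIV \<and> D \<inter> H G \<subseteq> g -` G"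
    using dense_open_vimage_open_map[OF assms(1-3)] \<G>(2) by metis
  show ?thesis
    unfolding meager_def by (rule exI[of _ "H ` \<G>"]) (use \<G> H in fastforce)
qed

lemma open_map_graph_point_avoiding_meager:
  fixes g :: "'a::polish_space \<Rightarrow> 'a"
  assumes D: "D \<subseteq> interior (closure D)" "gdelta_in euclidean D"
    and R: "R \<subseteq> interior (closure R)"
    and g: "continuous_on D g" "open_map (top_of_set D) (top_of_set R) g"
    and U: "open U" "y \<in> D" "y \<in> U" "g y \<in> U"
    and M: "meager M"
  shows "\<exists>z\<in>D. z \<in> U \<and> g z \<in> U \<and> z \<notin> M \<and> g z \<notin> M"
proof -
  obtain Q where Q: "open Q" "Q \<inter> D = g -` U \<inter> D"
    using g(1) U(1) unfolding continuous_on_open_invariant by blast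
  define P where "P = U \<inter> Q \<inter> interior (closure D)"
  have "\<not> meager P"
    using nonempty_open_not_meager[of P] Q U D(1) unfolding P_def by auto
  moreover have "meager ((closure D - D) \<union> M \<union> (D \<inter> g -` M))"
    using meager_closure_diff_gdelta[OF D(2)] M meager_vimage_open_map[OF R g M]
    by (intro meager_Un)
  ultimately obtain z where "z \<in> P" "z \<notin> (closure D - D) \<union> M \<union> (D \<inter> g -` M)"
    using meager_mono by blast
  then show ?thesis
    using Q interior_subset[of "closure D"] unfolding P_def by blast
qed

lemma subset_interior_closure_if_dense_in_open:
  "open V \<Longrightarrow> S \<subseteq> V \<Longrightarrow> V \<subseteq> closure S \<Longrightarrow> S \<subseteq> interior (closure S)"
  using interior_maximal by blast

theorem lemma2p1:
  fixes D R :: "nat \<Rightarrow> 'a::polish_space set" and f :: "nat \<Rightarrow> 'a \<Rightarrow> 'a"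
  assumes D_dense_Gdelta: "\<forall>n. \<exists>U. open U \<and> D n \<subseteq> U \<and> U \<subseteq> closure (D n) \<and> gdelta_in euclidean (D n)"
      and R_dense_Gdelta: "\<forall>n. \<exists>V. open V \<and> R n \<subseteq> V \<and> V \<subseteq> closure (R n) \<and> gdelta_in euclidean (R n)"
      and f_cont: "\<forall>n. continuous_on (D n) (f n)"
      and f_open: "\<forall>n. open_map (top_of_set (D n)) (top_of_set (R n)) (f n)"
      and f_onto: "\<forall>n. f n ` D n = R n"
      and diag_sub: "diag \<subseteq> closure (\<Union>n. graph_of (D n) (f n)) - (\<Union>n. graph_of (D n) (f n))"
  shows "(\<Union>n. graph_of (D n) (f n)) \<inter> diag = {} \<and>
         \<not> (\<exists>c :: 'a \<Rightarrow> nat. c \<in> borel_measurable borel \<and>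
               (\<forall>(x, y) \<in> (\<Union>n. graph_of (D n) (f n)). c x \<noteq> c y))"
proof (intro conjI notI)
  define A where "A = (\<Union>n. graph_of (D n) (f n))"
  show "(\<Union>n. graph_of (D n) (f n)) \<inter> diag = {}"
    using diag_sub by blast
  assume "\<exists>c :: 'a \<Rightarrow> nat. c \<in> borel_measurable borel \<and>
            (\<forall>(x, y) \<in> (\<Union>n. graph_of (D n) (f n)). c x \<noteq> c y)"
  then obtain c :: "'a \<Rightarrow> nat" where c: "c \<in> borel_measurable borel" "\<forall>(x, y) \<in> A. c x \<noteq> c y"
    unfolding A_def by blast
  have "has_baire_property (c -` {k})" for k
    using borel_has_baire_property borel_measurable_vimage[OF c(1), of k] by simp
  then obtain k U where U: "open U" "U \<noteq> {}" "meager (U - c -` {k})"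
    using baire_property_cover_comeager_somewhere[of "\<lambda>k. c -` {k}"] by blast
  then obtain x where "x \<in> U" by blast
  with diag_sub have "(x, x) \<in> (U \<times> U) \<inter> closure A"
    unfolding A_def diag_def by blast
  then have "(U \<times> U) \<inter> A \<noteq> {}"
    using open_Int_closure_eq_empty[of "U \<times> U" A] open_Times[OF U(1) U(1)] by blast
  then obtain n y where y: "y \<in> D n" "y \<in> U" "f n y \<in> U"
    unfolding A_def graph_of_def by auto
  have "D n \<subseteq> interior (closure (D n))" "gdelta_in euclidean (D n)"
       "R n \<subseteq> interior (closure (R n))"
    using D_dense_Gdelta R_dense_Gdelta subset_interior_closure_if_dense_in_open by meson+
  then obtain z where "z \<in> D n" "z \<in> U" "f n z \<in> U" "z \<notin> U - c -` {k}" "f n z \<notin> U - c -` {k}"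
    using open_map_graph_point_avoiding_meager[OF _ _ _ f_cont[rule_format] f_open[rule_format] U(1) y U(3)]
    by blast
  moreover from \<open>z \<in> D n\<close> have "(z, f n z) \<in> A"
    unfolding A_def graph_of_def by blast
  ultimately show False
    using c(2) by auto
qed

end
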